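(* Let $\phi:\mathbb{R}^d\to\mathbb{R}$ be differentiable with constants $0<m\le M$ such that $m\|x-y\|^2\le[\nabla\phi(x)-\nabla\phi(y)]^T(x-y)\le M\|x-y\|^2$ for all $x,y\in\mathbb{R}^d$, and let the observed function $f$ and gradient $g$ satisfy $|\phi(x)-f(x)|\le\epsilon_f$ and $\|\nabla\phi(x)-g(x)\|\le\epsilon_g$ for all $x$, with $\epsilon_f\ge0$, $\epsilon_g>0$. Let $\{x_k\}$, $\{p_k\}$ be generated by the Noise-Tolerant BFGS/L-BFGS method described in the context, using either the full-BFGS or the L-BFGS variant. Then for any $0<q<1$ there exists $\gamma>0$ such that for all $k\in\mathbb{N}$, $$|J(\gamma)\cap[0,k-1]|\ge qk,$$ where $J(\gamma)=\{k\in\mathbb{N}:\cos\theta_k\ge\gamma\}$ and $\theta_k$ is the angle between $p_k$ and $-g(x_k)$.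
   Context: Noise-Tolerant BFGS/L-BFGS method: inputs are the noisy function $f$ and gradient $g$, the gradient noise bound $\epsilon_g$, constants $0<c_1<c_2<1$ and $c_3>0$, an initial point $x_0$ and a symmetric positive definite $H_0$. For $k=0,1,2,\dots$: (1) compute $p_k=-H_kg(x_k)$, where in the full-BFGS variant $H_k$ is the current BFGS matrix and in the L-BFGS variant with memory $t$, $H_k$ is obtained by applying the BFGS update successively with the most recent (up to) $t$ stored pairs $(s_i,y_i)$ to the initial matrix $\gamma_kI$, $\gamma_k=s_{k-1}^Ty_{k-1}/y_{k-1}^Ty_{k-1}$; (2) perform a line search to obtain $\alpha_k>0$ satisfying the Armijo condition $f(x_k+\alpha_kp_k)\le f(x_k)+c_1\alpha_kg(x_k)^Tp_k$ and the Wolfe condition $g(x_k+\alpha_kp_k)^Tp_k\ge c_2g(x_k)^Tp_k$; if the line search fails, compute $\alpha_k$ such that $f(x_k+\alpha_kp_k)\le f(x_k)$; (3) set $x_{k+1}=x_k+\alpha_kp_k$; (4) compute a lengthening parameter $\beta_k>0$ satisfying the noise control condition $(g(x_k+\beta_kp_k)-g(x_k))^Tp_k\ge2(1+c_3)\epsilon_g\|p_k\|$; (5) set $s_k=\beta_kp_k$, $y_k=g(x_k+\beta_kp_k)-g(x_k)$; (6) update $H_{k+1}=(I-\rho_ks_ky_k^T)H_k(I-\rho_ky_ks_k^T)+\rho_ks_ks_k^T$ with $\rho_k=1/y_k^Ts_k$ (full BFGS), or add $(s_k,y_k)$ to the stored set of the last $t$ pairs (L-BFGS). $\|\cdot\|$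 is the Euclidean norm. *)

theory Defs
  imports "HOL-Analysis.Analysis"
begin

definition outer :: "real^'n \<Rightarrow> real^'n \<Rightarrow> real^'n^'n" where
  "outer u v = (\<chi> i j. u $ i * v $ j)"

definition bfgs_update :: "real^'n \<Rightarrow> real^'n \<Rightarrow> real^'n^'n \<Rightarrow> real^'n^'n" where
  "bfgs_update s y H =
     (let \<rho> = 1 / (y \<bullet> s) in
       (mat 1 - \<rho> *\<^sub>R outer s y) ** H ** (mat 1 - \<rho> *\<^sub>R outer y s) + \<rho> *\<^sub>R outer s s)"

text \<open>L-BFGS matrix with memory t at iteration k (k \<ge> 1): successive BFGS updates with
  the pairs i = max(0,k-t), ..., k-1 (oldest first) applied to gamma_k I,
  gamma_k = s_{k-1}^T y_{k-1} / y_{k-1}^T y_{k-1}.\<close>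
definition lbfgs_matrix :: "nat \<Rightarrow> (nat \<Rightarrow> real^'n) \<Rightarrow> (nat \<Rightarrow> real^'n) \<Rightarrow> nat \<Rightarrow> real^'n^'n" where
  "lbfgs_matrix t s y k =
     foldl (\<lambda>H i. bfgs_update (s i) (y i) H)
       (((s (k - 1) \<bullet> y (k - 1)) / (y (k - 1) \<bullet> y (k - 1))) *\<^sub>R mat 1)
       [k - t..<k]"

definition cos_angle :: "real^'n \<Rightarrow> real^'n \<Rightarrow> real" where
  "cos_angle u v = (u \<bullet> v) / (norm u * norm v)"

definition sym_pos_def_mat :: "real^'n^'n \<Rightarrow> bool" where
  "sym_pos_def_mat A \<longleftrightarrow> transpose A = A \<and> (\<forall>v. v \<noteq> 0 \<longrightarrow> v \<bullet> (A *v v) > 0)"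

end

theory Submission
  imports Defs
begin

text \<open>
  The noise control condition makes every curvature pair satisfy y.s \<ge> mu |s|^2 and
  |y| \<le> L |s| with mu, L independent of k: the gradient noise changes y.s by at most
  2 eps_g |s|, which the lengthening dominates. For any positive definite H, the cosine of the
  angle between H g and g is at least 1 / (n^4 tr H tr H^-1).
  For L-BFGS, H_k arises from gamma_k I by at most t updates with such pairs, so both traces,
  and hence the cosines, are bounded uniformly in k.
  For full BFGS we follow Byrd and Nocedal: psi(B) = tr B - ln det B is bounded below on
  positive definite matrices and psi(H_(k+1)^-1) \<le> psi(H_k^-1) + C + 2 ln cos theta_k.
  Hence the sums of -ln cos theta_j over j < k grow at most linearly in k, and at most a
  fraction 1 - q of the indices can have cos theta_j below a suitable threshold.
\<close>

lemma matrix_vector_mult_axis: "((A::real^'n^'m) *v axis j 1) $ i = A $ i $ j"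
  by (simp add: matrix_vector_mult_def axis_def if_distrib cong: if_cong)

lemma inner_axis_mulv_axis: "axis i 1 \<bullet> ((A::real^'n^'n) *v axis j 1) = A $ i $ j"
  by (simp add: inner_axis' matrix_vector_mult_axis)

lemma trace_eq_sum_inner_axis: "trace (A::real^'n^'n) = (\<Sum>i\<in>UNIV. axis i 1 \<bullet> (A *v axis i 1))"
  by (simp add: trace_def inner_axis_mulv_axis)

lemma trace_scaleR: "trace (c *\<^sub>R (A::real^'n^'n)) = c * trace A"
  by (simp add: trace_def sum_distrib_left)

lemma matrix_inv_eqI:
  fixes A B :: "real^'n^'n"
  assumes AB: "A ** B = mat 1"
  shows "matrix_inv A = B"
proof -
  have BA: "B ** A = mat 1" using AB matrix_left_right_inverse by blast
  have "A ** matrix_inv A = mat 1 \<and> matrix_inv A ** A = mat 1"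
    unfolding matrix_inv_def by (rule someI[of _ B]) (simp add: AB BA)
  then show ?thesis
    by (metis BA matrix_mul_assoc matrix_mul_lid matrix_mul_rid)
qed

lemma outer_mulv: "outer u v *v w = (v \<bullet> w) *\<^sub>R u"
  by (simp add: outer_def matrix_vector_mult_def vec_eq_iff inner_vec_def sum_distrib_left
      mult.commute mult.left_commute)

lemma trace_outer: "trace (outer u v) = u \<bullet> v"
  by (simp add: trace_def outer_def inner_vec_def)

text \<open>Matrix determinant lemma: expanding row by row, every term in which two rows are
  multiples of v vanishes.\<close>

lemma det_axis_rows_with_row:
  fixes u v :: "real^'n"
  assumes "finite S" "k \<notin> S"
  shows "det (\<chi> i. if i = k then v else if i \<in> S then axis i 1 + u$i *s v else axis i 1) = v $ k"
  using assms
proof (induction S rule: finite_induct)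
  case empty
  have rows: "row i (mat 1 :: real^'n^'n) = axis i 1" for i
    by (simp add: row_def axis_def mat_def vec_eq_iff)
  have "(\<chi> i. if i = k then v else if i \<in> {} then axis i 1 + u$i *s v else axis i 1)
      = (\<chi> i. if i = k then v else axis i 1)"
    by (intro arg_cong[where f = vec_lambda] ext) simp
  then show ?case
    using cramer_lemma_transpose[of k v "mat 1 :: real^'n^'n", unfolded rows basis_expansion]
    by simp
next
  case (insert j S)
  define N where "N i = (if i = k then v else if i \<in> S then axis i 1 + u$i *s v else axis i 1)" for i
  have jk: "j \<noteq> k" using insert by auto
  have split: "(\<chi> i. if i = k then v else if i \<in> insert j S then axis i 1 + u$i *s v else axis i 1)
     = (\<chi> i. if i = j then axis j 1 + u$j *s v else N i)"
    using jk by (auto simp: vec_eq_iff N_def)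
  have unchanged: "(\<chi> i. if i = j then axis j 1 else N i) = (\<chi> i. N i)"
    using insert jk by (auto simp: vec_eq_iff N_def)
  have repeated: "det (\<chi> i. if i = j then v else N i) = 0"
    by (rule det_identical_rows[OF jk]) (simp add: row_def N_def vec_eq_iff jk)
  show ?case
    unfolding split det_row_add[of j "\<lambda>_. axis j 1" "\<lambda>_. u$j *s v" N]
      det_row_mul[of j "u$j" "\<lambda>_. v" N]
    using unchanged repeated insert by (simp add: N_def)
qed

lemma det_axis_rows:
  fixes u v :: "real^'n"
  assumes "finite S"
  shows "det (\<chi> i. if i \<in> S then axis i 1 + u$i *s v else axis i 1) = 1 + (\<Sum>i\<in>S. u$i * v$i)"
  using assms
proof (induction S rule: finite_induct)
  case empty
  have "(\<chi> i. axis i 1) = (mat 1 :: real^'n^'n)" by (simp add: vec_eq_iff axis_def mat_def)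
  then show ?case by simp
next
  case (insert k S)
  define N where "N i = (if i \<in> S then axis i 1 + u$i *s v else axis i 1)" for i
  have split: "(\<chi> i. if i \<in> insert k S then axis i 1 + u$i *s v else axis i 1)
     = (\<chi> i. if i = k then axis k 1 + u$k *s v else N i)"
    by (auto simp: vec_eq_iff N_def)
  have unchanged: "(\<chi> i. if i = k then axis k 1 else N i) = (\<chi> i. N i)"
    using insert by (auto simp: vec_eq_iff N_def)
  have "(\<chi> i. if i = k then v else N i)
      = (\<chi> i. if i = k then v else if i \<in> S then axis i 1 + u$i *s v else axis i 1)"
    by (simp add: N_def fun_eq_iff)
  then show ?case
    unfolding split det_row_add[of k "\<lambda>_. axis k 1" "\<lambda>_. u$k *s v" N]
      det_row_mul[of k "u$k" "\<lambda>_. v" N]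
    using unchanged insert det_axis_rows_with_row[OF insert(1,2), of v u] by (simp add: N_def)
qed

lemma det_identity_add_outer: "det (mat 1 + outer u v) = 1 + v \<bullet> (u::real^'n)"
proof -
  have "mat 1 + outer u v = (\<chi> i. if i \<in> UNIV then axis i 1 + u$i *s v else axis i 1)"
    by (simp add: vec_eq_iff outer_def axis_def mat_def)
  then show ?thesis using det_axis_rows[of UNIV u v]
    by (simp add: inner_vec_def mult.commute)
qed

lemma det_identity_add_two_outer:
  fixes u1 v1 u2 v2 :: "real^'n"
  assumes nz: "1 + v2 \<bullet> u2 \<noteq> 0"
  shows "det (mat 1 + outer u1 v1 + outer u2 v2)
           = (1 + v1 \<bullet> u1) * (1 + v2 \<bullet> u2) - (v1 \<bullet> u2) * (v2 \<bullet> u1)"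
proof -
  define \<kappa> where "\<kappa> = (v2 \<bullet> u1) / (1 + v2 \<bullet> u2)"
  define w where "w = u1 - \<kappa> *\<^sub>R u2"
  have "v2 \<bullet> w = \<kappa>"
    using nz by (simp add: w_def \<kappa>_def inner_diff_right field_simps)
  then have w: "w + (v2 \<bullet> w) *\<^sub>R u2 = u1" by (simp add: w_def)
  have factor: "mat 1 + outer u1 v1 + outer u2 v2 = (mat 1 + outer u2 v2) ** (mat 1 + outer w v1)"
  proof (subst matrix_eq, intro allI)
    fix z :: "real^'n"
    have "((mat 1 + outer u2 v2) ** (mat 1 + outer w v1)) *v z
        = z + (v1 \<bullet> z) *\<^sub>R (w + (v2 \<bullet> w) *\<^sub>R u2) + (v2 \<bullet> z) *\<^sub>R u2"
      by (simp add: matrix_vector_mul_assoc[symmetric] outer_mulv algebra_simps)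
    then show "(mat 1 + outer u1 v1 + outer u2 v2) *v z
        = ((mat 1 + outer u2 v2) ** (mat 1 + outer w v1)) *v z"
      by (simp add: w matrix_vector_mult_add_rdistrib outer_mulv)
  qed
  have "det (mat 1 + outer u1 v1 + outer u2 v2) = (1 + v2 \<bullet> u2) * (1 + v1 \<bullet> w)"
    unfolding factor det_mul det_identity_add_outer ..
  also have "\<dots> = (1 + v1 \<bullet> u1) * (1 + v2 \<bullet> u2) - (v1 \<bullet> u2) * (v2 \<bullet> u1)"
    using nz by (simp add: w_def \<kappa>_def inner_diff_right field_simps)
  finally show ?thesis .
qed

section \<open>Symmetric positive definite matrices\<close>

lemma inner_mulv_transpose: "u \<bullet> ((A::real^'n^'n) *v v) = (transpose A *v u) \<bullet> v"
  by (simp add: dot_lmul_matrix)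

lemma sym_pos_def_mat_iff:
  "sym_pos_def_mat (A::real^'n^'n) \<longleftrightarrow>
     (\<forall>u v. u \<bullet> (A *v v) = (A *v u) \<bullet> v) \<and> (\<forall>v. v \<noteq> 0 \<longrightarrow> 0 < v \<bullet> (A *v v))"
proof -
  have "transpose A = A \<longleftrightarrow> (\<forall>u. transpose A *v u = A *v u)"
    by (simp add: matrix_eq)
  also have "\<dots> \<longleftrightarrow> (\<forall>u v. u \<bullet> (A *v v) = (A *v u) \<bullet> v)"
    by (simp add: inner_mulv_transpose vector_eq_rdot)
  finally show ?thesis by (simp add: sym_pos_def_mat_def)
qed

lemma sym_pos_def_mat_inner_commute:
  "sym_pos_def_mat A \<Longrightarrow> u \<bullet> (A *v v) = (A *v u) \<bullet> v"
  unfolding sym_pos_def_mat_iff by blast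

lemma sym_pos_def_mat_pos: "sym_pos_def_mat A \<Longrightarrow> v \<noteq> 0 \<Longrightarrow> 0 < v \<bullet> (A *v v)"
  unfolding sym_pos_def_mat_iff by blast

lemma sym_pos_def_mat_nonneg: "sym_pos_def_mat A \<Longrightarrow> 0 \<le> v \<bullet> (A *v v)"
  by (cases "v = 0") (auto dest: sym_pos_def_mat_pos)

lemma sym_pos_def_mat_mulv_eq_0: "sym_pos_def_mat A \<Longrightarrow> A *v v = 0 \<Longrightarrow> v = 0"
  by (metis inner_zero_right less_irrefl sym_pos_def_mat_pos)

lemma sym_pos_def_mat_scaleR_mat_1: "0 < c \<Longrightarrow> sym_pos_def_mat (c *\<^sub>R mat 1 :: real^'n^'n)"
  by (simp add: sym_pos_def_mat_iff scaleR_matrix_vector_assoc[symmetric])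

lemma matrix_inv_scaleR_mat_1: "c \<noteq> 0 \<Longrightarrow> matrix_inv (c *\<^sub>R mat 1 :: real^'n^'n) = (1/c) *\<^sub>R mat 1"
  by (rule matrix_inv_eqI) (simp add: matrix_scalar_ac)

lemma sym_pos_def_mat_inverse:
  fixes H :: "real^'n^'n"
  assumes H: "sym_pos_def_mat H"
  shows "H ** matrix_inv H = mat 1" "H *v (matrix_inv H *v v) = v" "matrix_inv H *v (H *v v) = v"
    "sym_pos_def_mat (matrix_inv H)"
proof -
  have "inj ((*v) H)"
    by (rule injI) (metis H sym_pos_def_mat_mulv_eq_0 matrix_vector_mult_diff_distrib right_minus_eq)
  then obtain B where "B ** H = mat 1" using matrix_left_invertible_injective by blast
  then have HB: "H ** B = mat 1" and BH: "B ** H = mat 1" using matrix_left_right_inverse by blast+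
  then show HB': "H ** matrix_inv H = mat 1" using matrix_inv_eqI by metis
  show HBv: "H *v (matrix_inv H *v v) = v" for v
    by (simp add: HB' matrix_vector_mul_assoc)
  show "matrix_inv H *v (H *v v) = v"
    using BH matrix_inv_eqI[OF HB] by (simp add: matrix_vector_mul_assoc)
  show "sym_pos_def_mat (matrix_inv H)"
    unfolding sym_pos_def_mat_iff
  proof (intro conjI allI impI)
    fix u v
    show "u \<bullet> (matrix_inv H *v v) = (matrix_inv H *v u) \<bullet> v"
      using sym_pos_def_mat_inner_commute[OF H, of "matrix_inv H *v u" "matrix_inv H *v v"]
      by (simp add: HBv)
  next
    fix v :: "real^'n" assume "v \<noteq> 0"
    then have "matrix_inv H *v v \<noteq> 0" by (metis HBv matrix_vector_mult_0_right)
    then show "0 < v \<bullet> (matrix_inv H *v v)"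
      using sym_pos_def_mat_pos[OF H] sym_pos_def_mat_inner_commute[OF H] by (metis HBv inner_commute)
  qed
qed

lemma sym_pos_def_mat_cauchy_schwarz:
  assumes A: "sym_pos_def_mat A"
  shows "(u \<bullet> (A *v w))\<^sup>2 \<le> (u \<bullet> (A *v u)) * (w \<bullet> (A *v w))"
proof (cases "w = 0")
  case False
  define b where "b = w \<bullet> (A *v w)"
  define c where "c = u \<bullet> (A *v w)"
  have b: "0 < b" using sym_pos_def_mat_pos[OF A False] by (simp add: b_def)
  have wu: "w \<bullet> (A *v u) = c"
    using sym_pos_def_mat_inner_commute[OF A, of w u] by (simp add: c_def inner_commute)
  have "0 \<le> (u - (c / b) *\<^sub>R w) \<bullet> (A *v (u - (c / b) *\<^sub>R w))"
    by (rule sym_pos_def_mat_nonneg[OF A])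
  also have "\<dots> = u \<bullet> (A *v u) - c\<^sup>2 / b"
    using b by (simp add: matrix_vector_mult_diff_distrib matrix_vector_mult_scaleR inner_diff_left
        inner_diff_right wu b_def[symmetric] c_def[symmetric] power2_eq_square field_simps)
  finally show ?thesis using b by (simp add: c_def b_def field_simps)
qed simp

lemma sym_pos_def_mat_diag_pos: "sym_pos_def_mat A \<Longrightarrow> 0 < (A::real^'n^'n) $ i $ i"
  by (metis inner_axis_mulv_axis axis_eq_0_iff sym_pos_def_mat_pos zero_neq_one)

lemma trace_pos: "sym_pos_def_mat A \<Longrightarrow> 0 < trace (A::real^'n^'n)"
  unfolding trace_def by (rule sum_pos) (auto intro: sym_pos_def_mat_diag_pos)

lemma diag_le_trace: "sym_pos_def_mat A \<Longrightarrow> (A::real^'n^'n) $ i $ i \<le> trace A"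
  unfolding trace_def by (rule member_le_sum) (auto intro: less_imp_le sym_pos_def_mat_diag_pos)

lemma abs_entry_le_trace:
  fixes A :: "real^'n^'n"
  assumes A: "sym_pos_def_mat A"
  shows "\<bar>A $ i $ j\<bar> \<le> trace A"
proof -
  have sym: "A $ j $ i = A $ i $ j"
    using sym_pos_def_mat_inner_commute[OF A, of "axis j 1" "axis i 1"]
    by (simp add: inner_axis_mulv_axis inner_commute)
  have quad: "(axis i 1 + c *\<^sub>R axis j 1) \<bullet> (A *v (axis i 1 + c *\<^sub>R axis j 1))
      = A$i$i + 2 * c * A$i$j + c\<^sup>2 * A$j$j" for c
    by (simp add: inner_axis_mulv_axis sym power2_eq_square algebra_simps)
  have "0 \<le> A$i$i + 2 * A$i$j + A$j$j"
    using sym_pos_def_mat_nonneg[OF A, of "axis i 1 + 1 *\<^sub>R axis j 1"] quad[of 1] by simp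
  moreover have "0 \<le> A$i$i - 2 * A$i$j + A$j$j"
    using sym_pos_def_mat_nonneg[OF A, of "axis i 1 + (-1) *\<^sub>R axis j 1"] quad[of "-1"] by simp
  moreover have "A$i$i \<le> trace A" "A$j$j \<le> trace A" using diag_le_trace[OF A] by auto
  ultimately show ?thesis by linarith
qed

lemma norm_mulv_le_trace:
  fixes A :: "real^'n^'n"
  assumes A: "sym_pos_def_mat A"
  shows "norm (A *v v) \<le> (real CARD('n))\<^sup>2 * trace A * norm v"
proof -
  have "onorm ((*v) A) \<le> real CARD('n) * real CARD('n) * trace A"
    by (rule onorm_le_matrix_component) (rule abs_entry_le_trace[OF A])
  then have "onorm ((*v) A) * norm v \<le> (real CARD('n))\<^sup>2 * trace A * norm v"
    by (simp add: mult_right_mono power2_eq_square)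
  then show ?thesis using onorm[OF matrix_vector_mul_bounded_linear, of A v] by linarith
qed

lemma abs_det_le_trace_power:
  fixes A :: "real^'n^'n"
  assumes A: "sym_pos_def_mat A"
  shows "\<bar>det A\<bar> \<le> fact CARD('n) * trace A ^ CARD('n)"
proof -
  have "\<bar>det A\<bar> \<le> (\<Sum>p\<in>{p. p permutes (UNIV::'n set)}. \<bar>of_int (sign p) * (\<Prod>i\<in>UNIV. A$i$p i)\<bar>)"
    unfolding det_def by (rule sum_abs)
  also have "\<dots> \<le> (\<Sum>p\<in>{p. p permutes (UNIV::'n set)}. trace A ^ CARD('n))"
  proof (rule sum_mono)
    fix p
    have "\<bar>of_int (sign p) * (\<Prod>i\<in>UNIV. A$i$p i)\<bar> = (\<Prod>i\<in>UNIV. \<bar>A$i$p i\<bar>)"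
      by (simp add: abs_mult abs_prod flip: of_int_abs)
    also have "\<dots> \<le> (\<Prod>i\<in>(UNIV::'n set). trace A)"
      by (rule prod_mono) (simp add: abs_entry_le_trace[OF A])
    finally show "\<bar>of_int (sign p) * (\<Prod>i\<in>UNIV. A$i$p i)\<bar> \<le> trace A ^ CARD('n)" by simp
  qed
  also have "\<dots> = fact CARD('n) * trace A ^ CARD('n)"
    by (simp add: card_permutations)
  finally show ?thesis .
qed

lemma cos_angle_le_1: "cos_angle u v \<le> 1"
proof (cases "norm u * norm v = 0")
  case False
  then show ?thesis
    using norm_cauchy_schwarz[of u v] by (simp add: cos_angle_def divide_le_eq_1)
qed (auto simp: cos_angle_def)

lemma cos_angle_mulv_pos:
  assumes "sym_pos_def_mat H" "g \<noteq> 0"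
  shows "0 < cos_angle (H *v g) g"
proof -
  have Hg: "0 < (H *v g) \<bullet> g" using sym_pos_def_mat_pos[OF assms] by (simp add: inner_commute)
  then have "H *v g \<noteq> 0" by auto
  then show ?thesis using Hg assms(2) by (simp add: cos_angle_def)
qed

text \<open>n^4 tr H tr H^-1 bounds the condition number of H, since the entries of a positive
  definite matrix are bounded by its trace.\<close>

lemma cos_angle_mulv_ge:
  fixes H :: "real^'n^'n"
  assumes H: "sym_pos_def_mat H" and g: "g \<noteq> 0"
  shows "1 / ((real CARD('n))^4 * trace H * trace (matrix_inv H)) \<le> cos_angle (H *v g) g"
proof -
  define KH where "KH = (real CARD('n))\<^sup>2 * trace H"
  define KB where "KB = (real CARD('n))\<^sup>2 * trace (matrix_inv H)"
  note inverse = sym_pos_def_mat_inverse[OF H]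
  have KH: "0 < KH" and KB: "0 < KB"
    using trace_pos[OF H] trace_pos[OF inverse(4)] by (simp_all add: KH_def KB_def)
  define h where "h = H *v g"
  have hg: "0 < h \<bullet> g" using sym_pos_def_mat_pos[OF H g] by (simp add: h_def inner_commute)
  have h: "0 < norm h" using hg by auto
  have "(norm h)\<^sup>2 * (norm h)\<^sup>2 = (h \<bullet> (H *v g))\<^sup>2"
    unfolding h_def power2_norm_eq_inner by (simp add: power2_eq_square)
  also have "\<dots> \<le> (h \<bullet> (H *v h)) * (h \<bullet> g)"
    using sym_pos_def_mat_cauchy_schwarz[OF H, of h g] by (simp add: h_def inner_commute)
  also have "\<dots> \<le> (KH * (norm h)\<^sup>2) * (h \<bullet> g)"
  proof (rule mult_right_mono)
    have "h \<bullet> (H *v h) \<le> norm h * norm (H *v h)" by (rule norm_cauchy_schwarz)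
    also have "\<dots> \<le> norm h * (KH * norm h)"
      using norm_mulv_le_trace[OF H, of h] by (intro mult_left_mono) (simp_all add: KH_def)
    finally show "h \<bullet> (H *v h) \<le> KH * (norm h)\<^sup>2" by (simp add: power2_eq_square mult.left_commute)
  qed (use hg in simp)
  finally have "(norm h)\<^sup>2 \<le> KH * (h \<bullet> g)" using h by (simp add: power2_eq_square)
  moreover have "norm g \<le> KB * norm h"
    using norm_mulv_le_trace[OF inverse(4), of h] inverse(3)[of g] by (simp add: KB_def h_def)
  ultimately have "norm h * norm g \<le> KB * (KH * (h \<bullet> g))"
    using h KB by (smt (verit) mult_left_mono power2_eq_square mult.commute mult.left_commute)
  then have "1 / (KH * KB) \<le> (h \<bullet> g) / (norm h * norm g)"
    using h g KH KB by (simp add: field_simps)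
  moreover have "KH * KB = (real CARD('n))^4 * trace H * trace (matrix_inv H)"
    by (simp add: KH_def KB_def power2_eq_square power4_eq_xxxx)
  ultimately show ?thesis by (simp add: cos_angle_def h_def)
qed

section \<open>The BFGS update\<close>

definition bfgs_direct_update :: "real^'n \<Rightarrow> real^'n \<Rightarrow> real^'n^'n \<Rightarrow> real^'n^'n" where
  "bfgs_direct_update s y B =
     B - (1 / (s \<bullet> (B *v s))) *\<^sub>R outer (B *v s) (B *v s) + (1 / (y \<bullet> s)) *\<^sub>R outer y y"

lemma bfgs_update_mulv:
  "bfgs_update s y H *v v =
     (let \<rho> = 1 / (y \<bullet> s); w = H *v (v - (\<rho> * (s \<bullet> v)) *\<^sub>R y)
      in w - (\<rho> * (y \<bullet> w)) *\<^sub>R s + (\<rho> * (s \<bullet> v)) *\<^sub>R s)"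
  unfolding bfgs_update_def Let_def
  by (simp add: matrix_vector_mul_assoc[symmetric] outer_mulv scaleR_matrix_vector_assoc[symmetric]
      algebra_simps)

lemma inner_bfgs_update:
  fixes H :: "real^'n^'n" and s y u v :: "real^'n"
  defines "\<rho> \<equiv> 1 / (y \<bullet> s)"
  shows "u \<bullet> (bfgs_update s y H *v v) =
    (u - (\<rho> * (s \<bullet> u)) *\<^sub>R y) \<bullet> (H *v (v - (\<rho> * (s \<bullet> v)) *\<^sub>R y)) + \<rho> * (s \<bullet> u) * (s \<bullet> v)"
  unfolding bfgs_update_mulv Let_def \<rho>_def[symmetric]
  by (simp add: inner_commute algebra_simps)

lemma bfgs_update_sym_pos_def:
  fixes H :: "real^'n^'n"
  assumes H: "sym_pos_def_mat H" and ys: "0 < y \<bullet> s"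
  shows "sym_pos_def_mat (bfgs_update s y H)"
  unfolding sym_pos_def_mat_iff
proof (intro conjI allI impI)
  define \<rho> where "\<rho> = 1 / (y \<bullet> s)"
  define V where "V v = v - (\<rho> * (s \<bullet> v)) *\<^sub>R y" for v
  have Q: "u \<bullet> (bfgs_update s y H *v v) = V u \<bullet> (H *v V v) + \<rho> * (s \<bullet> u) * (s \<bullet> v)" for u v
    unfolding V_def \<rho>_def by (rule inner_bfgs_update)
  fix u v
  show "u \<bullet> (bfgs_update s y H *v v) = (bfgs_update s y H *v u) \<bullet> v"
    using Q[of u v] Q[of v u] sym_pos_def_mat_inner_commute[OF H, of "V u" "V v"]
    by (simp add: inner_commute)
  assume "v \<noteq> 0"
  show "0 < v \<bullet> (bfgs_update s y H *v v)"
  proof (cases "s \<bullet> v = 0")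
    case True
    then show ?thesis using Q[of v v] sym_pos_def_mat_pos[OF H \<open>v \<noteq> 0\<close>] by (simp add: V_def)
  next
    case False
    then have "0 < \<rho> * (s \<bullet> v)\<^sup>2" using ys by (simp add: \<rho>_def)
    then have "0 < \<rho> * (s \<bullet> v) * (s \<bullet> v)" by (simp add: power2_eq_square mult.assoc)
    then show ?thesis using Q[of v v] sym_pos_def_mat_nonneg[OF H, of "V v"] by linarith
  qed
qed

lemma bfgs_update_mult_bfgs_direct_update:
  fixes H :: "real^'n^'n"
  assumes H: "sym_pos_def_mat H" and ys: "0 < y \<bullet> s"
  shows "bfgs_update s y H ** bfgs_direct_update s y (matrix_inv H) = mat 1"
proof (subst matrix_eq, intro allI)
  fix v :: "real^'n"
  define B where "B = matrix_inv H"
  note inverse = sym_pos_def_mat_inverse[OF H, folded B_def]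
  define \<rho> where "\<rho> = 1 / (y \<bullet> s)"
  define a where "a = s \<bullet> (B *v s)"
  have "s \<noteq> 0" using ys by auto
  then have a: "a \<noteq> 0" using sym_pos_def_mat_pos[OF inverse(4), of s] by (simp add: a_def)
  have \<rho>: "\<rho> * (y \<bullet> s) = 1" "\<rho> * (s \<bullet> y) = 1" using ys by (simp_all add: \<rho>_def inner_commute)
  define z where "z = bfgs_direct_update s y B *v v"
  have z: "z = B *v v - ((1/a) * ((B *v s) \<bullet> v)) *\<^sub>R (B *v s) + (\<rho> * (y \<bullet> v)) *\<^sub>R y"
    by (simp add: z_def bfgs_direct_update_def a_def \<rho>_def matrix_vector_mult_add_rdistrib
        matrix_vector_mult_diff_rdistrib scaleR_matrix_vector_assoc[symmetric] outer_mulv)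
  have "s \<bullet> (B *v v) = (B *v s) \<bullet> v" by (rule sym_pos_def_mat_inner_commute[OF inverse(4)])
  then have sz: "s \<bullet> z = y \<bullet> v"
    using a \<rho> by (simp add: z inner_diff_right inner_add_right a_def[symmetric])
  have Hz: "H *v (z - (\<rho> * (y \<bullet> v)) *\<^sub>R y) = v - ((1/a) * ((B *v s) \<bullet> v)) *\<^sub>R s"
    by (simp add: z matrix_vector_mult_diff_distrib matrix_vector_mult_scaleR inverse(2))
  have "bfgs_update s y H *v z = v"
    unfolding bfgs_update_mulv Let_def \<rho>_def[symmetric] Hz sz
    using \<rho> by (simp add: algebra_simps)
  then show "(bfgs_update s y H ** bfgs_direct_update s y (matrix_inv H)) *v v = mat 1 *v v"
    by (simp add: z_def B_def matrix_vector_mul_assoc[symmetric])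
qed

lemma matrix_inv_bfgs_update:
  fixes H :: "real^'n^'n"
  assumes "sym_pos_def_mat H" "0 < y \<bullet> s"
  shows "matrix_inv (bfgs_update s y H) = bfgs_direct_update s y (matrix_inv H)"
  by (rule matrix_inv_eqI) (rule bfgs_update_mult_bfgs_direct_update[OF assms])

lemma trace_bfgs_direct_update:
  "trace (bfgs_direct_update s y B)
     = trace B - (norm (B *v s))\<^sup>2 / (s \<bullet> (B *v s)) + (norm y)\<^sup>2 / (y \<bullet> s)"
  by (simp add: bfgs_direct_update_def trace_add trace_sub trace_scaleR trace_outer
      power2_norm_eq_inner)

text \<open>The direct update factors as a rank-two modification of the identity times B.\<close>

lemma det_bfgs_direct_update:
  fixes H :: "real^'n^'n"
  assumes H: "sym_pos_def_mat H" and ys: "0 < y \<bullet> s"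
  shows "det (bfgs_direct_update s y (matrix_inv H))
           = det (matrix_inv H) * ((y \<bullet> s) / (s \<bullet> (matrix_inv H *v s)))"
proof -
  define B where "B = matrix_inv H"
  note inverse = sym_pos_def_mat_inverse[OF H, folded B_def]
  define \<rho> where "\<rho> = 1 / (y \<bullet> s)"
  define a where "a = s \<bullet> (B *v s)"
  have "s \<noteq> 0" using ys by auto
  then have a: "a \<noteq> 0" using sym_pos_def_mat_pos[OF inverse(4), of s] by (simp add: a_def)
  have \<rho>: "0 < \<rho>" "\<rho> * (y \<bullet> s) = 1" using ys by (simp_all add: \<rho>_def)
  define u1 where "u1 = (- 1/a) *\<^sub>R (B *v s)"
  define u2 where "u2 = \<rho> *\<^sub>R y"
  have HyB: "(H *v y) \<bullet> (B *v v) = y \<bullet> v" for v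
    using sym_pos_def_mat_inner_commute[OF H, of y "B *v v"] inverse(2) by simp
  have factor: "bfgs_direct_update s y B = (mat 1 + outer u1 s + outer u2 (H *v y)) ** B"
  proof (subst matrix_eq, intro allI)
    fix v :: "real^'n"
    have "s \<bullet> (B *v v) = (B *v s) \<bullet> v" by (rule sym_pos_def_mat_inner_commute[OF inverse(4)])
    then show "bfgs_direct_update s y B *v v = ((mat 1 + outer u1 s + outer u2 (H *v y)) ** B) *v v"
      by (simp add: bfgs_direct_update_def u1_def u2_def \<rho>_def a_def HyB
          matrix_vector_mul_assoc[symmetric] scaleR_matrix_vector_assoc[symmetric] outer_mulv
          algebra_simps)
  qed
  have "0 \<le> \<rho> * (y \<bullet> (H *v y))" using \<rho> sym_pos_def_mat_nonneg[OF H] by simp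
  then have nz: "1 + (H *v y) \<bullet> u2 \<noteq> 0" by (simp add: u2_def inner_commute)
  have "det (bfgs_direct_update s y B)
      = det B * ((1 + s \<bullet> u1) * (1 + (H *v y) \<bullet> u2) - (s \<bullet> u2) * ((H *v y) \<bullet> u1))"
    unfolding factor det_mul det_identity_add_two_outer[OF nz] by simp
  also have "1 + s \<bullet> u1 = 0" using a by (simp add: u1_def a_def)
  also have "(s \<bullet> u2) * ((H *v y) \<bullet> u1) = - ((y \<bullet> s) / a)"
    using HyB[of s] \<rho> a by (simp add: u1_def u2_def inner_commute)
  finally show ?thesis by (simp add: B_def a_def)
qed

definition bounded_curvature_pair :: "real \<Rightarrow> real \<Rightarrow> 'a::real_inner \<Rightarrow> 'a \<Rightarrow> bool" where
  "bounded_curvature_pair \<mu> L s y \<longleftrightarrow>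
     s \<noteq> 0 \<and> \<mu> * (norm s)\<^sup>2 \<le> y \<bullet> s \<and> norm y \<le> L * norm s"

lemma bounded_curvature_pair_inner_pos:
  "bounded_curvature_pair \<mu> L s y \<Longrightarrow> 0 < \<mu> \<Longrightarrow> 0 < y \<bullet> s"
  unfolding bounded_curvature_pair_def by (metis mult_pos_pos order_less_le_trans zero_less_norm_iff zero_less_power)

lemma bounded_curvature_pair_ratios:
  assumes pair: "bounded_curvature_pair \<mu> L s y" and \<mu>: "0 < \<mu>"
  shows "(norm y)\<^sup>2 / (y \<bullet> s) \<le> L\<^sup>2 / \<mu>" "norm s * norm y / (y \<bullet> s) \<le> L / \<mu>"
    "(norm s)\<^sup>2 / (y \<bullet> s) \<le> 1 / \<mu>" "(s \<bullet> y) / (y \<bullet> y) \<le> 1 / \<mu>"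
proof -
  have s: "0 < norm s" and lo: "\<mu> * (norm s)\<^sup>2 \<le> y \<bullet> s" and up: "norm y \<le> L * norm s"
    using pair by (auto simp: bounded_curvature_pair_def)
  have ys: "0 < y \<bullet> s" by (rule bounded_curvature_pair_inner_pos[OF pair \<mu>])
  have cs: "y \<bullet> s \<le> norm y * norm s" by (rule norm_cauchy_schwarz)
  have L: "0 \<le> L" using order_trans[OF norm_ge_zero up] s by (simp add: zero_le_mult_iff)
  have "(norm y)\<^sup>2 * \<mu> \<le> (L * norm s)\<^sup>2 * \<mu>"
    using up \<mu> by (intro mult_right_mono power_mono) auto
  also have "\<dots> = L\<^sup>2 * (\<mu> * (norm s)\<^sup>2)" by (simp add: power_mult_distrib)
  also have "\<dots> \<le> L\<^sup>2 * (y \<bullet> s)" using lo by (intro mult_left_mono) auto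
  finally show "(norm y)\<^sup>2 / (y \<bullet> s) \<le> L\<^sup>2 / \<mu>" using ys \<mu> by (simp add: divide_simps)
  have "norm s * norm y * \<mu> \<le> L * (\<mu> * (norm s)\<^sup>2)"
    using up s \<mu> by (simp add: power2_eq_square mult_left_mono mult.commute mult.left_commute)
  also have "\<dots> \<le> L * (y \<bullet> s)" using lo L by (intro mult_left_mono) auto
  finally show "norm s * norm y / (y \<bullet> s) \<le> L / \<mu>" using ys \<mu> by (simp add: divide_simps)
  show "(norm s)\<^sup>2 / (y \<bullet> s) \<le> 1 / \<mu>" using lo ys \<mu> by (simp add: divide_simps mult.commute)
  have "\<mu> * norm s * norm s \<le> norm y * norm s" using lo cs by (simp add: power2_eq_square)
  then have "\<mu> * norm s \<le> norm y" using s by simp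
  then have "\<mu> * (norm y * norm s) \<le> norm y * norm y"
    using mult_left_mono[of "\<mu> * norm s" "norm y" "norm y"] by (simp add: mult_ac)
  then have "\<mu> * (y \<bullet> s) \<le> norm y * norm y"
    using cs \<mu> by (meson mult_left_mono less_imp_le order_trans)
  then show "(s \<bullet> y) / (y \<bullet> y) \<le> 1 / \<mu>"
    using ys \<mu> by (simp add: divide_simps inner_commute dot_square_norm power2_eq_square mult.commute)
qed

lemma trace_bfgs_update_le:
  fixes H :: "real^'n^'n"
  assumes H: "sym_pos_def_mat H" and pair: "bounded_curvature_pair \<mu> L s y" and \<mu>: "0 < \<mu>"
  shows "trace (bfgs_update s y H)
           \<le> (real CARD('n))^3 * (1 + L / \<mu>)\<^sup>2 * trace H + real CARD('n) / \<mu>"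
proof -
  define KH where "KH = (real CARD('n))\<^sup>2 * trace H"
  have KH: "0 \<le> KH" using trace_pos[OF H] by (simp add: KH_def)
  define \<rho> where "\<rho> = 1 / (y \<bullet> s)"
  have \<rho>: "0 < \<rho>" using bounded_curvature_pair_inner_pos[OF pair \<mu>] by (simp add: \<rho>_def)
  note ratios = bounded_curvature_pair_ratios[OF pair \<mu>, folded \<rho>_def]
  have diag: "axis i 1 \<bullet> (bfgs_update s y H *v axis i 1) \<le> KH * (1 + L / \<mu>)\<^sup>2 + 1 / \<mu>" for i
  proof -
    define v where "v = axis i 1 - (\<rho> * (s \<bullet> axis i 1)) *\<^sub>R y"
    have si: "\<bar>s \<bullet> axis i 1\<bar> \<le> norm s"
      using Cauchy_Schwarz_ineq2[of s "axis i 1"] by simp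
    have "norm v \<le> 1 + \<rho> * \<bar>s \<bullet> axis i 1\<bar> * norm y"
      using norm_triangle_ineq4[of "axis i 1" "(\<rho> * (s \<bullet> axis i 1)) *\<^sub>R y"] \<rho>
      by (simp add: v_def abs_mult)
    also have "\<dots> \<le> 1 + \<rho> * norm s * norm y" using si \<rho> by (simp add: mult_right_mono)
    also have "\<dots> \<le> 1 + L / \<mu>" using ratios(2) by (simp add: \<rho>_def)
    finally have v: "norm v \<le> 1 + L / \<mu>" .
    have "v \<bullet> (H *v v) \<le> norm v * norm (H *v v)" by (rule norm_cauchy_schwarz)
    also have "\<dots> \<le> norm v * (KH * norm v)"
      using norm_mulv_le_trace[OF H] by (intro mult_left_mono) (simp_all add: KH_def)
    also have "\<dots> = KH * (norm v)\<^sup>2" by (simp add: power2_eq_square)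
    also have "\<dots> \<le> KH * (1 + L / \<mu>)\<^sup>2" using v KH by (intro mult_left_mono power_mono) auto
    finally have 1: "v \<bullet> (H *v v) \<le> KH * (1 + L / \<mu>)\<^sup>2" .
    have "\<rho> * (s \<bullet> axis i 1) * (s \<bullet> axis i 1) \<le> \<rho> * (norm s)\<^sup>2"
      using si \<rho> abs_le_square_iff[of "s \<bullet> axis i 1" "norm s"]
      by (simp add: power2_eq_square mult.assoc)
    also have "\<dots> \<le> 1 / \<mu>" using ratios(3) by (simp add: \<rho>_def)
    finally show ?thesis
      using 1 inner_bfgs_update[of "axis i 1" s y H "axis i 1"] by (simp add: v_def \<rho>_def)
  qed
  have "trace (bfgs_update s y H) \<le> (\<Sum>i\<in>(UNIV::'n set). KH * (1 + L / \<mu>)\<^sup>2 + 1 / \<mu>)"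
    unfolding trace_eq_sum_inner_axis by (rule sum_mono) (rule diag)
  then show ?thesis by (simp add: KH_def power2_eq_square power3_eq_cube algebra_simps)
qed

lemma trace_matrix_inv_bfgs_update_le:
  fixes H :: "real^'n^'n"
  assumes H: "sym_pos_def_mat H" and pair: "bounded_curvature_pair \<mu> L s y" and \<mu>: "0 < \<mu>"
  shows "trace (matrix_inv (bfgs_update s y H)) \<le> trace (matrix_inv H) + L\<^sup>2 / \<mu>"
proof -
  have ys: "0 < y \<bullet> s" by (rule bounded_curvature_pair_inner_pos[OF pair \<mu>])
  have "0 \<le> s \<bullet> (matrix_inv H *v s)"
    by (rule sym_pos_def_mat_nonneg[OF sym_pos_def_mat_inverse(4)[OF H]])
  then have "0 \<le> (norm (matrix_inv H *v s))\<^sup>2 / (s \<bullet> (matrix_inv H *v s))" by simp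
  then show ?thesis
    using bounded_curvature_pair_ratios(1)[OF pair \<mu>]
    by (simp add: matrix_inv_bfgs_update[OF H ys] trace_bfgs_direct_update)
qed

section \<open>The potential of Byrd and Nocedal\<close>

definition bfgs_potential :: "real^'n^'n \<Rightarrow> real" where
  "bfgs_potential B = trace B - ln \<bar>det B\<bar>"

lemma bfgs_potential_ge:
  fixes B :: "real^'n^'n"
  assumes B: "sym_pos_def_mat B" and "det B \<noteq> 0"
  shows "- (ln (fact CARD('n)) + real CARD('n) * ln (real CARD('n))) \<le> bfgs_potential B"
proof -
  define n where "n = real CARD('n)"
  define t where "t = trace B"
  have t: "0 < t" using trace_pos[OF B] by (simp add: t_def)
  have n: "0 < n" by (simp add: n_def)
  have "ln \<bar>det B\<bar> \<le> ln (fact CARD('n) * t ^ CARD('n))"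
    using abs_det_le_trace_power[OF B] assms(2) by (simp add: t_def)
  also have "\<dots> = ln (fact CARD('n)) + n * (ln n + ln (t / n))"
    using t n by (simp add: ln_mult ln_realpow ln_div n_def)
  also have "ln (t / n) \<le> t / n - 1" using t n by (intro ln_le_minus_one) simp
  then have "n * ln (t / n) \<le> t - n" using n by (simp add: field_simps)
  then have "ln (fact CARD('n)) + n * (ln n + ln (t / n)) \<le> ln (fact CARD('n)) + n * ln n + t - n"
    by (simp add: algebra_simps)
  finally show ?thesis using n by (simp add: bfgs_potential_def n_def t_def)
qed

lemma bfgs_potential_matrix_inv_bfgs_update_le:
  fixes H :: "real^'n^'n"
  assumes H: "sym_pos_def_mat H" and g: "g \<noteq> 0" and b: "b \<noteq> 0" and s: "s = b *\<^sub>R (H *v g)"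
    and pair: "bounded_curvature_pair \<mu> L s y" and \<mu>: "0 < \<mu>"
  shows "bfgs_potential (matrix_inv (bfgs_update s y H))
           \<le> bfgs_potential (matrix_inv H) + (L\<^sup>2 / \<mu> - ln \<mu>) + 2 * ln (cos_angle (H *v g) g)"
proof -
  define B where "B = matrix_inv H"
  note inverse = sym_pos_def_mat_inverse[OF H, folded B_def]
  define h where "h = H *v g"
  have ys: "0 < y \<bullet> s" by (rule bounded_curvature_pair_inner_pos[OF pair \<mu>])
  have hg: "0 < h \<bullet> g" using sym_pos_def_mat_pos[OF H g] by (simp add: h_def inner_commute)
  have h: "0 < norm h" and ng: "0 < norm g" using hg g by auto
  have b2: "0 < b\<^sup>2" using b by simp
  have Bs: "B *v s = b *\<^sub>R g" by (simp add: s matrix_vector_mult_scaleR inverse(3))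
  define a where "a = s \<bullet> (B *v s)"
  have a: "a = b\<^sup>2 * (h \<bullet> g)" unfolding a_def Bs by (simp add: s h_def power2_eq_square)
  define T where "T = (norm g)\<^sup>2 / (h \<bullet> g)"
  have "(norm (B *v s))\<^sup>2 / a = T"
    using b hg by (simp add: Bs a T_def power_mult_distrib)
  then have trace: "trace (matrix_inv (bfgs_update s y H)) = trace B - T + (norm y)\<^sup>2 / (y \<bullet> s)"
    by (simp add: matrix_inv_bfgs_update[OF H ys] trace_bfgs_direct_update B_def a_def)
  have "det H * det B = 1" using inverse(1) det_mul[of H B] by simp
  then have "det B \<noteq> 0" by auto
  then have ln_det: "ln \<bar>det (matrix_inv (bfgs_update s y H))\<bar> = ln \<bar>det B\<bar> + ln (y \<bullet> s) - ln a"
    using ys b2 hg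
    by (simp add: matrix_inv_bfgs_update[OF H ys, folded B_def]
        det_bfgs_direct_update[OF H ys, folded B_def, folded a_def] a abs_mult ln_mult ln_div)
  have ln_a: "ln a = ln (b\<^sup>2) + ln (h \<bullet> g)" using b2 hg by (simp add: a ln_mult)
  have "(norm s)\<^sup>2 = b\<^sup>2 * (norm h)\<^sup>2" by (simp add: s h_def power_mult_distrib)
  then have "\<mu> * (b\<^sup>2 * (norm h)\<^sup>2) \<le> y \<bullet> s"
    using pair by (simp add: bounded_curvature_pair_def)
  then have "ln (\<mu> * (b\<^sup>2 * (norm h)\<^sup>2)) \<le> ln (y \<bullet> s)"
    using \<mu> b2 h ys by (subst ln_le_cancel_iff) auto
  then have ln_ys: "ln \<mu> + ln (b\<^sup>2) + 2 * ln (norm h) \<le> ln (y \<bullet> s)"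
    using \<mu> b2 h by (simp add: ln_mult ln_realpow)
  have "ln T \<le> T - 1" using ng hg by (intro ln_le_minus_one) (simp add: T_def)
  then have ln_T: "2 * ln (norm g) - ln (h \<bullet> g) \<le> T"
    using ng hg by (simp add: T_def ln_div ln_realpow)
  have cos: "ln (cos_angle (H *v g) g) = ln (h \<bullet> g) - ln (norm h) - ln (norm g)"
    using hg h ng by (simp add: cos_angle_def h_def[symmetric] ln_div ln_mult)
  show ?thesis
    unfolding bfgs_potential_def B_def[symmetric] trace ln_det cos
    using ln_a ln_ys ln_T bounded_curvature_pair_ratios(1)[OF pair \<mu>] by argo
qed

section \<open>Full BFGS\<close>

lemma card_bounded_terms_ge:
  fixes d :: "nat \<Rightarrow> real"
  assumes d: "\<And>j. 0 \<le> d j" and sums: "\<And>k. (\<Sum>j<k. d j) \<le> A + C * real k" and q: "q < 1"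
  obtains \<Lambda> where "0 < \<Lambda>" "\<And>k. q * real k \<le> real (card {j. j < k \<and> d j \<le> \<Lambda>})"
proof
  define \<Lambda> where "\<Lambda> = (\<bar>A\<bar> + \<bar>C\<bar> + 1) / (1 - q)"
  show \<Lambda>: "0 < \<Lambda>" using q by (simp add: \<Lambda>_def)
  fix k
  show "q * real k \<le> real (card {j. j < k \<and> d j \<le> \<Lambda>})"
  proof (cases "k = 0")
    case False
    define large where "large = {j. j < k \<and> \<not> d j \<le> \<Lambda>}"
    have "card {j. j < k \<and> d j \<le> \<Lambda>} + card large = card ({j. j < k \<and> d j \<le> \<Lambda>} \<union> large)"
      by (rule card_Un_disjoint[symmetric]) (auto simp: large_def)
    also have "{j. j < k \<and> d j \<le> \<Lambda>} \<union> large = {..<k}" by (auto simp: large_def)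
    finally have "card {j. j < k \<and> d j \<le> \<Lambda>} + card large = k" by simp
    moreover have "real (card large) * \<Lambda> \<le> (1 - q) * real k * \<Lambda>"
    proof -
      have "real (card large) * \<Lambda> = (\<Sum>j\<in>large. \<Lambda>)" by simp
      also have "\<dots> \<le> (\<Sum>j\<in>large. d j)" by (rule sum_mono) (simp add: large_def)
      also have "\<dots> \<le> (\<Sum>j<k. d j)" by (rule sum_mono2) (auto simp: large_def d)
      also have "\<dots> \<le> (\<bar>A\<bar> + \<bar>C\<bar> + 1) * real k"
      proof -
        have "A \<le> \<bar>A\<bar> * real k"
          using False mult_left_mono[of 1 "real k" "\<bar>A\<bar>"] by simp
        moreover have "C * real k \<le> \<bar>C\<bar> * real k" by (simp add: mult_right_mono)
        ultimately show ?thesis using sums[of k] by (simp add: algebra_simps)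
      qed
      also have "\<dots> = (1 - q) * real k * \<Lambda>" using q by (simp add: \<Lambda>_def)
      finally show ?thesis .
    qed
    then have "real (card large) \<le> (1 - q) * real k" using \<Lambda> by simp
    ultimately show ?thesis by (simp add: algebra_simps flip: of_nat_add)
  qed simp
qed

lemma bfgs_iterates_sym_pos_def:
  fixes H :: "nat \<Rightarrow> real^'n^'n"
  assumes "sym_pos_def_mat (H 0)" and "\<And>k. H (Suc k) = bfgs_update (s k) (y k) (H k)"
    and "\<And>k. sym_pos_def_mat (H k) \<Longrightarrow> 0 < y k \<bullet> s k"
  shows "sym_pos_def_mat (H k)"
  by (induction k) (simp_all add: assms bfgs_update_sym_pos_def)

lemma bfgs_frequently_good_angles:
  fixes H :: "nat \<Rightarrow> real^'n^'n" and s y G :: "nat \<Rightarrow> real^'n"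
  assumes H0: "sym_pos_def_mat (H 0)" and upd: "\<And>k. H (Suc k) = bfgs_update (s k) (y k) (H k)"
    and pairs: "\<And>k. bounded_curvature_pair \<mu> L (s k) (y k)" and \<mu>: "0 < \<mu>"
    and dir: "\<And>k. s k = b k *\<^sub>R (H k *v G k)" "\<And>k. b k \<noteq> 0" and G: "\<And>k. G k \<noteq> 0"
    and q: "q < 1"
  shows "\<exists>\<gamma>>0. \<forall>k. q * real k \<le> real (card {j. j < k \<and> \<gamma> \<le> cos_angle (H j *v G j) (G j)})"
proof -
  have H: "sym_pos_def_mat (H k)" for k
    by (rule bfgs_iterates_sym_pos_def[where H = H, OF H0 upd
          bounded_curvature_pair_inner_pos[OF pairs \<mu>]])
  define c where "c k = cos_angle (H k *v G k) (G k)" for k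
  have c: "0 < c k" "c k \<le> 1" for k
    using cos_angle_mulv_pos[OF H G] cos_angle_le_1 by (auto simp: c_def)
  define \<psi> where "\<psi> k = bfgs_potential (matrix_inv (H k))" for k
  define C where "C = L\<^sup>2 / \<mu> - ln \<mu>"
  have step: "\<psi> (Suc k) \<le> \<psi> k + C + 2 * ln (c k)" for k
    using bfgs_potential_matrix_inv_bfgs_update_le[OF H G dir(2) dir(1) pairs \<mu>]
    by (simp add: \<psi>_def C_def c_def upd)
  have sums: "\<psi> k + (\<Sum>j<k. - 2 * ln (c j)) \<le> \<psi> 0 + C * real k" for k
  proof (induction k)
    case (Suc k)
    then show ?case using step[of k] by (simp add: algebra_simps)
  qed simp
  define C0 where "C0 = ln (fact CARD('n)) + real CARD('n) * ln (real CARD('n))"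
  have lower: "- C0 \<le> \<psi> k" for k
  proof -
    note inverse = sym_pos_def_mat_inverse[OF H[of k]]
    have "det (H k) * det (matrix_inv (H k)) = 1"
      using arg_cong[OF inverse(1), of det] by (simp add: det_mul)
    then have "det (matrix_inv (H k)) \<noteq> 0" by auto
    then show ?thesis using bfgs_potential_ge[OF inverse(4)] by (simp add: \<psi>_def C0_def)
  qed
  have bound: "(\<Sum>j<k. - 2 * ln (c j)) \<le> (\<psi> 0 + C0) + C * real k" for k
    using sums[of k] lower[of k] by linarith
  have nonneg: "0 \<le> - 2 * ln (c j)" for j using c[of j] by simp
  obtain \<Lambda> where \<Lambda>: "0 < \<Lambda>"
    "\<And>k. q * real k \<le> real (card {j. j < k \<and> - 2 * ln (c j) \<le> \<Lambda>})"
    using card_bounded_terms_ge[of "\<lambda>j. - 2 * ln (c j)", OF nonneg bound q] by blast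
  have "- 2 * ln (c j) \<le> \<Lambda> \<longleftrightarrow> exp (- \<Lambda> / 2) \<le> c j" for j
  proof -
    have "- 2 * ln (c j) \<le> \<Lambda> \<longleftrightarrow> - \<Lambda> / 2 \<le> ln (c j)" by auto
    also have "\<dots> \<longleftrightarrow> exp (- \<Lambda> / 2) \<le> c j" using c(1) by (rule ln_ge_iff)
    finally show ?thesis .
  qed
  then have "q * real k \<le> real (card {j. j < k \<and> exp (- \<Lambda> / 2) \<le> c j})" for k
    using \<Lambda>(2)[of k] by simp
  then show ?thesis unfolding c_def by (intro exI[of _ "exp (- \<Lambda> / 2)"]) auto
qed

section \<open>Limited-memory BFGS\<close>

lemma foldl_bfgs_update_sym_pos_def:
  fixes H0 :: "real^'n^'n"
  assumes "sym_pos_def_mat H0" and "\<forall>i\<in>set is. 0 < y i \<bullet> s i"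
  shows "sym_pos_def_mat (foldl (\<lambda>H i. bfgs_update (s i) (y i) H) H0 is)"
  using assms by (induction "is" arbitrary: H0) (simp_all add: bfgs_update_sym_pos_def)

lemma trace_foldl_bfgs_update_le:
  fixes H0 :: "real^'n^'n" and \<mu> L :: real
  defines "c \<equiv> real CARD('n) ^ 3 * (1 + L / \<mu>)\<^sup>2"
  assumes H0: "sym_pos_def_mat H0" and pairs: "\<forall>i\<in>set is. bounded_curvature_pair \<mu> L (s i) (y i)"
    and \<mu>: "0 < \<mu>" and L: "0 \<le> L"
  shows "trace (foldl (\<lambda>H i. bfgs_update (s i) (y i) H) H0 is)
           \<le> c ^ length is * (trace H0 + real (length is) * (real CARD('n) / \<mu>))"
  using H0 pairs
proof (induction "is" arbitrary: H0)
  case (Cons i "is")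
  define a where "a = real CARD('n) / \<mu>"
  have a: "0 \<le> a" using \<mu> by (simp add: a_def)
  have "1 * 1 \<le> real CARD('n) ^ 3 * (1 + L / \<mu>)\<^sup>2"
    using L \<mu> by (intro mult_mono) simp_all
  then have c: "1 \<le> c" by (simp add: c_def)
  have pair: "bounded_curvature_pair \<mu> L (s i) (y i)" using Cons.prems(2) by simp
  define H1 where "H1 = bfgs_update (s i) (y i) H0"
  have H1: "sym_pos_def_mat H1"
    unfolding H1_def
    by (rule bfgs_update_sym_pos_def[OF Cons.prems(1) bounded_curvature_pair_inner_pos[OF pair \<mu>]])
  have "trace H1 \<le> c * trace H0 + a"
    using trace_bfgs_update_le[OF Cons.prems(1) pair \<mu>] by (simp add: H1_def c_def a_def)
  then have "trace (foldl (\<lambda>H i. bfgs_update (s i) (y i) H) H1 is)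
      \<le> c ^ length is * (c * trace H0 + a + real (length is) * a)"
    using Cons.IH[OF H1] Cons.prems(2) c by (simp add: a_def) (smt (verit) mult_left_mono zero_le_power)
  also have "\<dots> \<le> c ^ length is * (c * (trace H0 + real (Suc (length is)) * a))"
  proof -
    have "(1 + real (length is)) * a \<le> c * ((1 + real (length is)) * a)"
      using mult_right_mono[OF c, of "(1 + real (length is)) * a"] a by simp
    then show ?thesis using c by (intro mult_left_mono) (simp_all add: algebra_simps)
  qed
  finally show ?case by (simp add: H1_def a_def mult_ac)
qed simp

lemma trace_matrix_inv_foldl_bfgs_update_le:
  fixes H0 :: "real^'n^'n"
  assumes H0: "sym_pos_def_mat H0" and pairs: "\<forall>i\<in>set is. bounded_curvature_pair \<mu> L (s i) (y i)"
    and \<mu>: "0 < \<mu>"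
  shows "trace (matrix_inv (foldl (\<lambda>H i. bfgs_update (s i) (y i) H) H0 is))
           \<le> trace (matrix_inv H0) + real (length is) * (L\<^sup>2 / \<mu>)"
  using H0 pairs
proof (induction "is" arbitrary: H0)
  case (Cons i "is")
  have pair: "bounded_curvature_pair \<mu> L (s i) (y i)" using Cons.prems(2) by simp
  have H1: "sym_pos_def_mat (bfgs_update (s i) (y i) H0)"
    by (rule bfgs_update_sym_pos_def[OF Cons.prems(1) bounded_curvature_pair_inner_pos[OF pair \<mu>]])
  show ?case
    using Cons.IH[OF H1] Cons.prems(2) trace_matrix_inv_bfgs_update_le[OF Cons.prems(1) pair \<mu>]
    by (simp add: distrib_right add_divide_distrib)
qed simp

lemma lbfgs_matrix_bounds:
  fixes s y :: "nat \<Rightarrow> real^'n" and \<mu> L :: real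
  defines "n \<equiv> real CARD('n)" and "c \<equiv> real CARD('n) ^ 3 * (1 + L / \<mu>)\<^sup>2"
  assumes k: "1 \<le> k" and pairs: "\<forall>i<k. bounded_curvature_pair \<mu> L (s i) (y i)"
    and \<mu>: "0 < \<mu>" and L: "0 \<le> L"
  shows "sym_pos_def_mat (lbfgs_matrix t s y k)"
    "trace (lbfgs_matrix t s y k) \<le> c ^ t * (n / \<mu> + real t * (n / \<mu>))"
    "trace (matrix_inv (lbfgs_matrix t s y k)) \<le> n * (L\<^sup>2 / \<mu>) + real t * (L\<^sup>2 / \<mu>)"
proof -
  have pair: "bounded_curvature_pair \<mu> L (s (k - 1)) (y (k - 1))" using pairs k by simp
  note ratios = bounded_curvature_pair_ratios[OF pair \<mu>]
  have ys: "0 < y (k - 1) \<bullet> s (k - 1)" by (rule bounded_curvature_pair_inner_pos[OF pair \<mu>])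
  then have yy: "0 < y (k - 1) \<bullet> y (k - 1)" by auto
  define \<gamma> where "\<gamma> = (s (k - 1) \<bullet> y (k - 1)) / (y (k - 1) \<bullet> y (k - 1))"
  have \<gamma>: "0 < \<gamma>" using ys yy by (simp add: \<gamma>_def inner_commute)
  define H0 where "H0 = \<gamma> *\<^sub>R (mat 1 :: real^'n^'n)"
  have H0: "sym_pos_def_mat H0" unfolding H0_def by (rule sym_pos_def_mat_scaleR_mat_1[OF \<gamma>])
  have "\<gamma> \<le> 1 / \<mu>" using ratios(4) by (simp add: \<gamma>_def)
  then have tH0: "trace H0 \<le> n / \<mu>"
    using mult_left_mono[of \<gamma> "1 / \<mu>" n] by (simp add: H0_def trace_scaleR trace_I n_def mult.commute)
  have "1 / \<gamma> \<le> L\<^sup>2 / \<mu>"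
    using ratios(1) by (simp add: \<gamma>_def inner_commute power2_norm_eq_inner)
  then have tB0: "trace (matrix_inv H0) \<le> n * (L\<^sup>2 / \<mu>)"
    using \<gamma> mult_left_mono[of "1 / \<gamma>" "L\<^sup>2 / \<mu>" n]
    by (simp add: H0_def matrix_inv_scaleR_mat_1 trace_scaleR trace_I n_def mult.commute)
  have lbfgs: "lbfgs_matrix t s y k = foldl (\<lambda>H i. bfgs_update (s i) (y i) H) H0 [k - t..<k]"
    by (simp add: lbfgs_matrix_def H0_def \<gamma>_def)
  have window: "\<forall>i\<in>set [k - t..<k]. bounded_curvature_pair \<mu> L (s i) (y i)" using pairs by auto
  have len: "length [k - t..<k] \<le> t" by simp
  have "\<forall>i\<in>set [k - t..<k]. 0 < y i \<bullet> s i"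
    using window bounded_curvature_pair_inner_pos[OF _ \<mu>] by blast
  then show "sym_pos_def_mat (lbfgs_matrix t s y k)"
    unfolding lbfgs by (rule foldl_bfgs_update_sym_pos_def[OF H0])
  have "1 * 1 \<le> real CARD('n) ^ 3 * (1 + L / \<mu>)\<^sup>2"
    using L \<mu> by (intro mult_mono) simp_all
  then have c: "1 \<le> c" by (simp add: c_def)
  have "trace (lbfgs_matrix t s y k)
      \<le> c ^ length [k - t..<k] * (trace H0 + real (length [k - t..<k]) * (n / \<mu>))"
    unfolding lbfgs c_def n_def by (rule trace_foldl_bfgs_update_le[OF H0 window \<mu> L])
  also have "\<dots> \<le> c ^ t * (n / \<mu> + real t * (n / \<mu>))"
    using c len tH0 trace_pos[OF H0] \<mu>
    by (intro mult_mono power_increasing add_mono mult_right_mono) (simp_all add: n_def)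
  finally show "trace (lbfgs_matrix t s y k) \<le> c ^ t * (n / \<mu> + real t * (n / \<mu>))" .
  have "trace (matrix_inv (lbfgs_matrix t s y k))
      \<le> trace (matrix_inv H0) + real (length [k - t..<k]) * (L\<^sup>2 / \<mu>)"
    unfolding lbfgs by (rule trace_matrix_inv_foldl_bfgs_update_le[OF H0 window \<mu>])
  also have "\<dots> \<le> n * (L\<^sup>2 / \<mu>) + real t * (L\<^sup>2 / \<mu>)"
    using tB0 len \<mu> by (intro add_mono mult_right_mono) simp_all
  finally show "trace (matrix_inv (lbfgs_matrix t s y k)) \<le> n * (L\<^sup>2 / \<mu>) + real t * (L\<^sup>2 / \<mu>)" .
qed

lemma bfgs_or_lbfgs_iterates_sym_pos_def:
  fixes H :: "nat \<Rightarrow> real^'n^'n"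
  assumes H0: "sym_pos_def_mat (H 0)"
    and variant: "(\<forall>k. H (Suc k) = bfgs_update (s k) (y k) (H k))
                  \<or> (\<exists>t. \<forall>k\<ge>1. H k = lbfgs_matrix t s y k)"
    and pairs: "\<And>k. sym_pos_def_mat (H k) \<Longrightarrow> bounded_curvature_pair \<mu> L (s k) (y k)"
    and \<mu>: "0 < \<mu>" and L: "0 \<le> L"
  shows "sym_pos_def_mat (H k)"
  using variant
proof
  assume "\<forall>k. H (Suc k) = bfgs_update (s k) (y k) (H k)"
  then have upd: "\<And>k. H (Suc k) = bfgs_update (s k) (y k) (H k)" by blast
  show ?thesis
    by (rule bfgs_iterates_sym_pos_def[where H = H, OF H0 upd
          bounded_curvature_pair_inner_pos[OF pairs \<mu>]])
next
  assume "\<exists>t. \<forall>k\<ge>1. H k = lbfgs_matrix t s y k"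
  then obtain t where lbfgs: "\<forall>k\<ge>1. H k = lbfgs_matrix t s y k" by blast
  show ?thesis
  proof (induction k rule: less_induct)
    case (less k)
    show ?case
    proof (cases "k = 0")
      case False
      then show ?thesis using lbfgs_matrix_bounds(1)[of k \<mu> L s y t] lbfgs less pairs \<mu> L by simp
    qed (simp add: H0)
  qed
qed

lemma lbfgs_good_angles:
  fixes H :: "nat \<Rightarrow> real^'n^'n" and s y G :: "nat \<Rightarrow> real^'n"
  assumes H0: "sym_pos_def_mat (H 0)" and lbfgs: "\<And>k. 1 \<le> k \<Longrightarrow> H k = lbfgs_matrix t s y k"
    and pairs: "\<And>k. bounded_curvature_pair \<mu> L (s k) (y k)" and \<mu>: "0 < \<mu>" and L: "0 < L"
    and G: "\<And>k. G k \<noteq> 0"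
  shows "\<exists>\<gamma>>0. \<forall>k. \<gamma> \<le> cos_angle (H k *v G k) (G k)"
proof -
  define n where "n = real CARD('n)"
  define TH where "TH = (n ^ 3 * (1 + L / \<mu>)\<^sup>2) ^ t * (n / \<mu> + real t * (n / \<mu>))"
  define TB where "TB = n * (L\<^sup>2 / \<mu>) + real t * (L\<^sup>2 / \<mu>)"
  have "0 < 1 + L / \<mu>" using \<mu> L by (intro add_pos_pos divide_pos_pos) auto
  then have TH: "0 < TH"
    unfolding TH_def n_def using \<mu> L
    by (intro mult_pos_pos zero_less_power add_pos_nonneg divide_pos_pos mult_nonneg_nonneg) auto
  have TB: "0 < TB"
    unfolding TB_def n_def using \<mu> L
    by (intro add_pos_nonneg mult_pos_pos divide_pos_pos mult_nonneg_nonneg) auto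
  have good: "1 / (n ^ 4 * TH * TB) \<le> cos_angle (H k *v G k) (G k)" if k: "1 \<le> k" for k
  proof -
    note bounds = lbfgs_matrix_bounds[OF k _ \<mu>, of L s y t, folded lbfgs[OF k] n_def]
    have H: "sym_pos_def_mat (H k)" and tH: "trace (H k) \<le> TH" and tB: "trace (matrix_inv (H k)) \<le> TB"
      using bounds pairs L by (simp_all add: TH_def TB_def)
    have "n ^ 4 * trace (H k) * trace (matrix_inv (H k)) \<le> n ^ 4 * TH * TB"
      using tH tB trace_pos[OF H] trace_pos[OF sym_pos_def_mat_inverse(4)[OF H]]
      by (intro mult_mono) (simp_all add: n_def)
    then have "1 / (n ^ 4 * TH * TB) \<le> 1 / (n ^ 4 * trace (H k) * trace (matrix_inv (H k)))"
      using trace_pos[OF H] trace_pos[OF sym_pos_def_mat_inverse(4)[OF H]] TH TB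
      by (intro divide_left_mono) (simp_all add: n_def)
    also have "\<dots> \<le> cos_angle (H k *v G k) (G k)"
      unfolding n_def by (rule cos_angle_mulv_ge[OF H G])
    finally show ?thesis .
  qed
  define \<gamma> where "\<gamma> = min (1 / (n ^ 4 * TH * TB)) (cos_angle (H 0 *v G 0) (G 0))"
  have "0 < \<gamma>" using TH TB cos_angle_mulv_pos[OF H0 G] by (simp add: \<gamma>_def n_def)
  moreover have "\<gamma> \<le> cos_angle (H k *v G k) (G k)" for k
    using good[of k] by (cases "k = 0") (auto simp: \<gamma>_def)
  ultimately show ?thesis by blast
qed

lemma bfgs_or_lbfgs_frequently_good_angles:
  fixes H :: "nat \<Rightarrow> real^'n^'n" and s y G :: "nat \<Rightarrow> real^'n"
  assumes H0: "sym_pos_def_mat (H 0)"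
    and variant: "(\<forall>k. H (Suc k) = bfgs_update (s k) (y k) (H k))
                  \<or> (\<exists>t. \<forall>k\<ge>1. H k = lbfgs_matrix t s y k)"
    and pairs: "\<And>k. bounded_curvature_pair \<mu> L (s k) (y k)" and \<mu>: "0 < \<mu>" and L: "0 < L"
    and dir: "\<And>k. s k = b k *\<^sub>R (H k *v G k)" "\<And>k. b k \<noteq> 0" and G: "\<And>k. G k \<noteq> 0"
    and q: "q < 1"
  shows "\<exists>\<gamma>>0. \<forall>k. q * real k \<le> real (card {j. j < k \<and> \<gamma> \<le> cos_angle (H j *v G j) (G j)})"
  using variant
proof
  assume "\<forall>k. H (Suc k) = bfgs_update (s k) (y k) (H k)"
  then show ?thesis
    by (intro bfgs_frequently_good_angles[where H = H, OF H0 _ pairs \<mu> dir G q]) blast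
next
  assume "\<exists>t. \<forall>k\<ge>1. H k = lbfgs_matrix t s y k"
  then obtain t where "\<forall>k\<ge>1. H k = lbfgs_matrix t s y k" by blast
  then have "\<exists>\<gamma>>0. \<forall>k. \<gamma> \<le> cos_angle (H k *v G k) (G k)"
    by (intro lbfgs_good_angles[where H = H, OF H0 _ pairs \<mu> L G]) auto
  then obtain \<gamma> where \<gamma>: "0 < \<gamma>" "\<And>k. \<gamma> \<le> cos_angle (H k *v G k) (G k)" by blast
  then have "{j. j < k \<and> \<gamma> \<le> cos_angle (H j *v G j) (G j)} = {..<k}" for k by auto
  moreover have "q * real k \<le> real k" for k
    using q mult_right_mono[of q 1 "real k"] by simp
  ultimately show ?thesis using \<gamma>(1) by (intro exI[of _ \<gamma>]) simp
qed

section \<open>Gradients and noisy curvature pairs\<close>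

lemma has_real_derivative_along_line:
  fixes \<phi> :: "'a::real_inner \<Rightarrow> real"
  assumes deriv: "\<And>z. (\<phi> has_derivative (\<lambda>h. G z \<bullet> h)) (at z)"
  shows "((\<lambda>t. \<phi> (x + t *\<^sub>R d)) has_real_derivative (G (x + t *\<^sub>R d) \<bullet> d)) (at t)"
proof -
  have "((\<lambda>t. x + t *\<^sub>R d) has_derivative (\<lambda>h. h *\<^sub>R d)) (at t)"
    by (auto intro!: derivative_eq_intros)
  from diff_chain_at[OF this deriv]
  have "((\<lambda>t. \<phi> (x + t *\<^sub>R d)) has_derivative (\<lambda>h. h * (G (x + t *\<^sub>R d) \<bullet> d))) (at t)"
    by (simp add: o_def)
  then show ?thesis
    unfolding has_field_derivative_def by (rule has_derivative_eq_rhs) (simp add: fun_eq_iff)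
qed

lemma strongly_monotone_gradient_imp_lower_bound:
  fixes \<phi> :: "'a::real_inner \<Rightarrow> real"
  assumes deriv: "\<And>z. (\<phi> has_derivative (\<lambda>h. G z \<bullet> h)) (at z)"
    and mono: "\<And>u v. m * (norm (u - v))\<^sup>2 \<le> (G u - G v) \<bullet> (u - v)"
  shows "\<phi> x + G x \<bullet> (y - x) + m / 2 * (norm (y - x))\<^sup>2 \<le> \<phi> y"
proof -
  define d where "d = y - x"
  define h where "h t = \<phi> (x + t *\<^sub>R d) - t * (G x \<bullet> d) - m / 2 * t\<^sup>2 * (norm d)\<^sup>2" for t
  have "(h has_real_derivative (G (x + t *\<^sub>R d) \<bullet> d - G x \<bullet> d - m * t * (norm d)\<^sup>2)) (at t)" for t
    unfolding h_def
    by (auto intro!: derivative_eq_intros has_real_derivative_along_line[OF deriv])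
  then obtain z where z: "0 < z" "z < 1"
    and mvt: "h 1 - h 0 = G (x + z *\<^sub>R d) \<bullet> d - G x \<bullet> d - m * z * (norm d)\<^sup>2"
    using MVT2[of 0 1 h] by force
  have "m * (norm (z *\<^sub>R d))\<^sup>2 \<le> (G (x + z *\<^sub>R d) - G x) \<bullet> (z *\<^sub>R d)"
    using mono[of "x + z *\<^sub>R d" x] by simp
  then have "z * (m * z * (norm d)\<^sup>2) \<le> z * ((G (x + z *\<^sub>R d) - G x) \<bullet> d)"
    using z by (simp add: power2_eq_square algebra_simps)
  then have "0 \<le> h 1 - h 0" using z mvt by (simp add: inner_diff_left)
  then show ?thesis by (simp add: h_def d_def)
qed

text \<open>Co-coercivity: the descent lemma at b - (G b - G a) / M, combined with the lower
  bound at a, yields a gain of norm (G b - G a)^2 / (2 M).\<close>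

lemma monotone_gradient_lipschitz:
  fixes \<phi> :: "'a::real_inner \<Rightarrow> real"
  assumes deriv: "\<And>z. (\<phi> has_derivative (\<lambda>h. G z \<bullet> h)) (at z)"
    and mono: "\<And>u v. 0 \<le> (G u - G v) \<bullet> (u - v)"
    and upper: "\<And>u v. (G u - G v) \<bullet> (u - v) \<le> M * (norm (u - v))\<^sup>2" and M: "0 < M"
  shows "norm (G y - G x) \<le> M * norm (y - x)"
proof -
  have descent: "\<phi> y \<le> \<phi> x + G x \<bullet> (y - x) + M / 2 * (norm (y - x))\<^sup>2" for x y
  proof -
    have "\<And>z. ((\<lambda>x. - \<phi> x) has_derivative (\<lambda>h. - G z \<bullet> h)) (at z)"
      using has_derivative_minus[OF deriv] by simp
    moreover have "- M * (norm (u - v))\<^sup>2 \<le> (- G u - - G v) \<bullet> (u - v)" for u v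
      using upper[of u v] by (simp add: inner_diff_left)
    ultimately show ?thesis
      using strongly_monotone_gradient_imp_lower_bound[of "\<lambda>x. - \<phi> x" "\<lambda>z. - G z" "- M" x y]
      by simp
  qed
  have gain: "\<phi> a + G a \<bullet> (b - a) + (norm (G b - G a))\<^sup>2 / (2 * M) \<le> \<phi> b" for a b
  proof -
    define D where "D = G b - G a"
    define z where "z = b - (1 / M) *\<^sub>R D"
    have "\<phi> a + G a \<bullet> (z - a) \<le> \<phi> z"
      using strongly_monotone_gradient_imp_lower_bound[of \<phi> G 0 a z] deriv mono by simp
    also have "\<dots> \<le> \<phi> b + G b \<bullet> (z - b) + M / 2 * (norm (z - b))\<^sup>2" by (rule descent)
    finally have "\<phi> a + G a \<bullet> (z - a) \<le> \<phi> b + G b \<bullet> (z - b) + M / 2 * (norm (z - b))\<^sup>2" .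
    moreover have "G a \<bullet> (z - a) = G a \<bullet> (b - a) - (G a \<bullet> D) / M"
      by (simp add: z_def algebra_simps)
    moreover have "G b \<bullet> (z - b) = - (G b \<bullet> D) / M" by (simp add: z_def)
    moreover have "M / 2 * (norm (z - b))\<^sup>2 = (norm D)\<^sup>2 / (2 * M)"
      using M by (simp add: z_def power2_eq_square field_simps)
    moreover have "(G b \<bullet> D) / M - (G a \<bullet> D) / M = (norm D)\<^sup>2 / M"
      by (simp add: D_def power2_norm_eq_inner inner_diff_left diff_divide_distrib)
    moreover have "(norm D)\<^sup>2 / M - (norm D)\<^sup>2 / (2 * M) = (norm D)\<^sup>2 / (2 * M)" by simp
    ultimately show ?thesis unfolding D_def by linarith
  qed
  define D where "D = G y - G x"
  have "(norm D)\<^sup>2 / M \<le> D \<bullet> (y - x)"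
    using gain[of x y] gain[of y x] M
    by (simp add: D_def norm_minus_commute inner_diff_left inner_diff_right field_simps)
  also have "\<dots> \<le> norm D * norm (y - x)" by (rule norm_cauchy_schwarz)
  finally have "norm D * norm D \<le> norm D * (M * norm (y - x))"
    using M by (simp add: power2_eq_square field_simps)
  then show ?thesis
    using M by (cases "norm D = 0") (auto simp: D_def mult_le_cancel_left)
qed

lemma noisy_curvature_pair:
  fixes grad g :: "'a::real_inner \<Rightarrow> 'a"
  assumes lip: "\<And>u v. norm (grad u - grad v) \<le> M * norm (u - v)"
    and lower: "\<And>u v. m * (norm (u - v))\<^sup>2 \<le> (grad u - grad v) \<bullet> (u - v)"
    and noise: "\<And>z. norm (grad z - g z) \<le> \<epsilon>"
    and c3: "0 < c3" and \<beta>: "0 < \<beta>" and p: "p \<noteq> 0"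
    and lengthening: "(g (x + \<beta> *\<^sub>R p) - g x) \<bullet> p \<ge> 2 * (1 + c3) * \<epsilon> * norm p"
  shows "bounded_curvature_pair (m * (1 + c3) / (2 + c3)) (M * (1 + c3) / c3)
           (\<beta> *\<^sub>R p) (g (x + \<beta> *\<^sub>R p) - g x)"
proof -
  define s where "s = \<beta> *\<^sub>R p"
  define y where "y = g (x + s) - g x"
  define D where "D = grad (x + s) - grad x"
  have s: "0 < norm s" using \<beta> p by (simp add: s_def)
  have "norm (y - D) \<le> norm (g (x + s) - grad (x + s)) + norm (g x - grad x)"
    by (metis (no_types) D_def y_def diff_diff_eq2 diff_diff_add norm_triangle_ineq4 add_diff_eq
        diff_add_eq diff_diff_eq)
  also have "\<dots> \<le> 2 * \<epsilon>" using noise[of "x + s"] noise[of x] by (simp add: norm_minus_commute)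
  finally have noise_yD: "norm (y - D) \<le> 2 * \<epsilon>" .
  have lengthened: "2 * (1 + c3) * \<epsilon> * norm s \<le> y \<bullet> s"
    using mult_left_mono[OF lengthening, of \<beta>] \<beta> by (simp add: s_def y_def algebra_simps)
  have "\<bar>(y - D) \<bullet> s\<bar> \<le> 2 * \<epsilon> * norm s"
    using Cauchy_Schwarz_ineq2[of "y - D" s] mult_right_mono[OF noise_yD norm_ge_zero[of s]] by linarith
  then have "- (2 * \<epsilon> * norm s) \<le> (y - D) \<bullet> s" by (simp add: abs_le_iff)
  moreover have "m * (norm s)\<^sup>2 \<le> D \<bullet> s" using lower[of "x + s" x] by (simp add: D_def)
  ultimately have "m * (norm s)\<^sup>2 - 2 * \<epsilon> * norm s \<le> y \<bullet> s" by (simp add: inner_diff_left)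
  then have "(1 + c3) * (m * (norm s)\<^sup>2 - 2 * \<epsilon> * norm s) \<le> (1 + c3) * (y \<bullet> s)"
    using c3 by (intro mult_left_mono) auto
  then have "(1 + c3) * (m * (norm s)\<^sup>2) \<le> (2 + c3) * (y \<bullet> s)"
    using lengthened by (simp add: algebra_simps)
  then have curvature: "m * (1 + c3) / (2 + c3) * (norm s)\<^sup>2 \<le> y \<bullet> s"
    using c3 by (simp add: field_simps)
  have "y \<bullet> s \<le> norm y * norm s" by (rule norm_cauchy_schwarz)
  then have "(2 * (1 + c3) * \<epsilon>) * norm s \<le> norm y * norm s" using lengthened by linarith
  then have "2 * (1 + c3) * \<epsilon> \<le> norm y" by (simp only: mult_le_cancel_right_pos[OF s])
  moreover have "norm y \<le> M * norm s + 2 * \<epsilon>"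
    using norm_triangle_ineq[of D "y - D"] lip[of "x + s" x] noise_yD by (simp add: D_def)
  then have "(1 + c3) * norm y \<le> (1 + c3) * (M * norm s + 2 * \<epsilon>)"
    using c3 by (intro mult_left_mono) auto
  ultimately have "c3 * norm y \<le> (1 + c3) * M * norm s" by (simp add: algebra_simps)
  then have "norm y \<le> M * (1 + c3) / c3 * norm s" using c3 by (simp add: field_simps)
  with curvature s show ?thesis unfolding bounded_curvature_pair_def s_def y_def by auto
qed

theorem lemma3p2:
  fixes \<phi> f :: "real^'n \<Rightarrow> real"
    and grad_\<phi> g :: "real^'n \<Rightarrow> real^'n"
    and m M \<epsilon>f \<epsilon>g c1 c2 c3 :: real
    and x p s y :: "nat \<Rightarrow> real^'n"
    and \<alpha> \<beta> :: "nat \<Rightarrow> real"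
    and H :: "nat \<Rightarrow> real^'n^'n"
  assumes deriv: "\<And>z. (\<phi> has_derivative (\<lambda>h. grad_\<phi> z \<bullet> h)) (at z)"
    and mM: "0 < m" "m \<le> M"
    and lower: "\<And>u v. m * (norm (u - v))\<^sup>2 \<le> (grad_\<phi> u - grad_\<phi> v) \<bullet> (u - v)"
    and upper: "\<And>u v. (grad_\<phi> u - grad_\<phi> v) \<bullet> (u - v) \<le> M * (norm (u - v))\<^sup>2"
    and noise_f: "\<And>z. \<bar>\<phi> z - f z\<bar> \<le> \<epsilon>f"
    and noise_g: "\<And>z. norm (grad_\<phi> z - g z) \<le> \<epsilon>g"
    and eps: "\<epsilon>f \<ge> 0" "\<epsilon>g > 0"
    and cs: "0 < c1" "c1 < c2" "c2 < 1" "c3 > 0"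
    and H0: "sym_pos_def_mat (H 0)"
    and nonstat: "\<And>k. g (x k) \<noteq> 0"
    and dir: "\<And>k. p k = - (H k *v g (x k))"
    and linesearch: "\<And>k. (\<alpha> k > 0
                 \<and> f (x k + \<alpha> k *\<^sub>R p k) \<le> f (x k) + c1 * \<alpha> k * (g (x k) \<bullet> p k)
                 \<and> g (x k + \<alpha> k *\<^sub>R p k) \<bullet> p k \<ge> c2 * (g (x k) \<bullet> p k))
              \<or> f (x k + \<alpha> k *\<^sub>R p k) \<le> f (x k)"
    and step: "\<And>k. x (Suc k) = x k + \<alpha> k *\<^sub>R p k"
    and lengthening: "\<And>k. \<beta> k > 0 \<and>
        (g (x k + \<beta> k *\<^sub>R p k) - g (x k)) \<bullet> p k \<ge> 2 * (1 + c3) * \<epsilon>g * norm (p k)"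
    and s_def: "\<And>k. s k = \<beta> k *\<^sub>R p k"
    and y_def: "\<And>k. y k = g (x k + \<beta> k *\<^sub>R p k) - g (x k)"
    and variant: "(\<forall>k. H (Suc k) = bfgs_update (s k) (y k) (H k))
               \<or> (\<exists>t::nat. t \<ge> 1 \<and> (\<forall>k\<ge>1. H k = lbfgs_matrix t s y k))"
  shows "\<forall>q::real. 0 < q \<and> q < 1 \<longrightarrow>
           (\<exists>\<gamma>>0. \<forall>k::nat.
              real (card {j. j < k \<and> cos_angle (p j) (- g (x j)) \<ge> \<gamma>}) \<ge> q * real k)"
proof (intro allI impI)
  fix q :: real assume q: "0 < q \<and> q < 1"
  define \<mu> where "\<mu> = m * (1 + c3) / (2 + c3)"
  define L where "L = M * (1 + c3) / c3"
  have \<mu>: "0 < \<mu>" and L: "0 < L" and M: "0 < M" using mM cs by (simp_all add: \<mu>_def L_def)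
  have mono: "0 \<le> (grad_\<phi> u - grad_\<phi> v) \<bullet> (u - v)" for u v
    using lower[of u v] mM(1) by (meson order_trans zero_le_mult_iff zero_le_power2 less_imp_le)
  have lip: "norm (grad_\<phi> u - grad_\<phi> v) \<le> M * norm (u - v)" for u v
    by (rule monotone_gradient_lipschitz[OF deriv mono upper M])
  have pair: "bounded_curvature_pair \<mu> L (s k) (y k)" if "sym_pos_def_mat (H k)" for k
  proof -
    have "p k \<noteq> 0" using sym_pos_def_mat_mulv_eq_0[OF that] nonstat[of k] dir[of k] by auto
    then show ?thesis
      using noisy_curvature_pair[OF lip lower noise_g cs(4)] lengthening[of k]
      by (simp add: s_def y_def \<mu>_def L_def)
  qed
  have variant': "(\<forall>k. H (Suc k) = bfgs_update (s k) (y k) (H k))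
                  \<or> (\<exists>t. \<forall>k\<ge>1. H k = lbfgs_matrix t s y k)"
    using variant by blast
  have spd: "sym_pos_def_mat (H k)" for k
    by (rule bfgs_or_lbfgs_iterates_sym_pos_def[where H = H,
          OF H0 variant' pair \<mu> less_imp_le[OF L]])
  have pairs: "bounded_curvature_pair \<mu> L (s k) (y k)" for k by (rule pair[OF spd])
  have step: "s k = (- \<beta> k) *\<^sub>R (H k *v g (x k))" "- \<beta> k \<noteq> 0" for k
    using s_def[of k] dir[of k] lengthening[of k] by auto
  have cos: "cos_angle (p k) (- g (x k)) = cos_angle (H k *v g (x k)) (g (x k))" for k
    by (simp add: dir cos_angle_def)
  show "\<exists>\<gamma>>0. \<forall>k. q * real k \<le> real (card {j. j < k \<and> cos_angle (p j) (- g (x j)) \<ge> \<gamma>})"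
    unfolding cos using q
    by (intro bfgs_or_lbfgs_frequently_good_angles[where H = H and b = "\<lambda>k. - \<beta> k",
          OF H0 variant' pairs \<mu> L step nonstat]) simp
qed

end
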